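(* Let $m \le n$ and $1 \le k \le m$. Let $X$ be a positive semidefinite operator on $\mathcal{H}_n \otimes \mathcal{H}_m$, and let $\Phi : \mathcal{L}(\mathcal{H}_m) \to \mathcal{L}(\mathcal{H}_m)$ be completely positive and trace-preserving. Then \[ \|(id_n \otimes \Phi^\dagger)(X)\|_{S(k)} \le \|X\|_{S(k)}. \]
   Context: $\mathcal{H}_d = \mathbb{C}^d$, $\mathcal{L}(\mathcal{H})$ denotes the linear operators on $\mathcal{H}$, $id_n$ is the identity map on $\mathcal{L}(\mathcal{H}_n)$, and $m\le n$. The dual map $\Phi^\dagger$ is defined by $\mathrm{Tr}(\Phi(A)B) = \mathrm{Tr}(A\,\Phi^\dagger(B))$ for all $A,B$. $SR$ denotes Schmidt rank, i.e. the number of nonzero singular values of the coefficient matrix of a vector in $\mathcal{H}_n\otimes\mathcal{H}_m$. $\|Y\|_{S(k)} := \sup\{|\langle w|Y|v\rangle| : |v\rangle,|w\rangle \text{ unit vectors in } \mathcal{H}_n\otimes\mathcal{H}_m, SR(|v\rangle),SR(|w\rangle)\le k\}$. *)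

theory Defs
  imports "Jordan_Normal_Form.DL_Rank" "Jordan_Normal_Form.Conjugate"
begin

text \<open>An operator on H_n (x) H_m is a complex (n*m) x (n*m) matrix,
  where the basis vector e_i (x) f_a (i < n, a < m) has index i*m + a.\<close>

definition mtrace :: "complex mat \<Rightarrow> complex" where
  "mtrace A = (\<Sum>i<dim_row A. A $$ (i,i))"

definition psd :: "nat \<Rightarrow> complex mat \<Rightarrow> bool" where
  "psd d X \<longleftrightarrow> X \<in> carrier_mat d d \<and>
     (\<forall>v \<in> carrier_vec d. Im ((X *\<^sub>v v) \<bullet>c v) = 0 \<and> 0 \<le> Re ((X *\<^sub>v v) \<bullet>c v))"

definition lin_map_on :: "nat \<Rightarrow> (complex mat \<Rightarrow> complex mat) \<Rightarrow> bool" where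
  "lin_map_on m \<Phi> \<longleftrightarrow>
     (\<forall>A \<in> carrier_mat m m. \<Phi> A \<in> carrier_mat m m) \<and>
     (\<forall>A \<in> carrier_mat m m. \<forall>B \<in> carrier_mat m m. \<Phi> (A + B) = \<Phi> A + \<Phi> B) \<and>
     (\<forall>A \<in> carrier_mat m m. \<forall>c. \<Phi> (c \<cdot>\<^sub>m A) = c \<cdot>\<^sub>m \<Phi> A)"

definition block :: "nat \<Rightarrow> complex mat \<Rightarrow> nat \<Rightarrow> nat \<Rightarrow> complex mat" where
  "block m X i j = mat m m (\<lambda>(a,b). X $$ (i*m + a, j*m + b))"

text \<open>(id_n (x) Phi)(X): acts blockwise, since X = sum E_ij (x) X_ij.\<close>
definition id_tensor :: "nat \<Rightarrow> nat \<Rightarrow> (complex mat \<Rightarrow> complex mat) \<Rightarrow> complex mat \<Rightarrow> complex mat" where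
  "id_tensor n m \<Phi> X = mat (n*m) (n*m)
     (\<lambda>(p,q). \<Phi> (block m X (p div m) (q div m)) $$ (p mod m, q mod m))"

definition completely_positive :: "nat \<Rightarrow> (complex mat \<Rightarrow> complex mat) \<Rightarrow> bool" where
  "completely_positive m \<Phi> \<longleftrightarrow>
     (\<forall>r Y. psd (r*m) Y \<longrightarrow> psd (r*m) (id_tensor r m \<Phi> Y))"

definition trace_preserving :: "nat \<Rightarrow> (complex mat \<Rightarrow> complex mat) \<Rightarrow> bool" where
  "trace_preserving m \<Phi> \<longleftrightarrow> (\<forall>A \<in> carrier_mat m m. mtrace (\<Phi> A) = mtrace A)"

definition is_dual_map :: "nat \<Rightarrow> (complex mat \<Rightarrow> complex mat) \<Rightarrow> (complex mat \<Rightarrow> complex mat) \<Rightarrow> bool" where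
  "is_dual_map m \<Phi> \<Psi> \<longleftrightarrow> (\<forall>B \<in> carrier_mat m m. \<Psi> B \<in> carrier_mat m m) \<and>
     (\<forall>A \<in> carrier_mat m m. \<forall>B \<in> carrier_mat m m. mtrace (\<Phi> A * B) = mtrace (A * \<Psi> B))"

definition coeff_mat :: "nat \<Rightarrow> nat \<Rightarrow> complex vec \<Rightarrow> complex mat" where
  "coeff_mat n m v = mat n m (\<lambda>(i,a). v $ (i*m + a))"

definition schmidt_rank :: "nat \<Rightarrow> nat \<Rightarrow> complex vec \<Rightarrow> nat" where
  "schmidt_rank n m v = vec_space.rank n (coeff_mat n m v)"

definition unit_vec_of :: "nat \<Rightarrow> complex vec \<Rightarrow> bool" where
  "unit_vec_of d v \<longleftrightarrow> v \<in> carrier_vec d \<and> v \<bullet>c v = 1"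

definition S_norm :: "nat \<Rightarrow> nat \<Rightarrow> nat \<Rightarrow> complex mat \<Rightarrow> real" where
  "S_norm n m k Y = Sup {cmod ((Y *\<^sub>v v) \<bullet>c w) | v w.
      unit_vec_of (n*m) v \<and> unit_vec_of (n*m) w \<and>
      schmidt_rank n m v \<le> k \<and> schmidt_rank n m w \<le> k}"

end

theory Submission
  imports Defs
begin

text \<open>Complete positivity makes the Choi matrix of Phi positive semidefinite, hence a Gram
  matrix; its Gram vectors are Kraus operators K_t with Phi(A) = sum_t K_t^T A conj(K_t).
  Dually, <(id (x) Phi^dagger)(X) v, w> = sum_t <X v_t, w_t> with v_t = (1 (x) K_t^T) v. The
  coefficient matrix of v_t is C_v K_t, so SR(v_t) <= SR(v), and trace preservation gives
  sum_t |v_t|^2 = |v|^2. Bounding each term by ||X||_S(k) |v_t| |w_t| and applying AM-GM gives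
  the claim.\<close>

definition kernel_form :: "'a set \<Rightarrow> ('a \<Rightarrow> 'a \<Rightarrow> complex) \<Rightarrow> ('a \<Rightarrow> complex) \<Rightarrow> complex" where
  "kernel_form S J u = (\<Sum>p\<in>S. \<Sum>q\<in>S. cnj (u p) * J p q * u q)"

definition psd_kernel :: "'a set \<Rightarrow> ('a \<Rightarrow> 'a \<Rightarrow> complex) \<Rightarrow> bool" where
  "psd_kernel S J \<longleftrightarrow> (\<forall>u. Im (kernel_form S J u) = 0 \<and> 0 \<le> Re (kernel_form S J u))"

lemma sum_mult_indicator_right:
  "finite S \<Longrightarrow> s \<in> S \<Longrightarrow> (\<Sum>q\<in>S. f q * (if q = s then l else 0)) = f s * (l::complex)"
  by (simp add: if_distrib[where f="\<lambda>x. _ * x"] sum.delta cong: if_cong)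

lemma sum_mult_indicator_left:
  "finite S \<Longrightarrow> s \<in> S \<Longrightarrow> (\<Sum>q\<in>S. (if q = s then l else 0) * f q) = (l::complex) * f s"
  using sum_mult_indicator_right[of S s f l] by (simp add: mult.commute)

lemma kernel_form_add_indicator:
  assumes "finite S" "s \<in> S"
  shows "kernel_form S J (\<lambda>q. u q + (if q = s then l else 0)) = kernel_form S J u
     + l * (\<Sum>p\<in>S. cnj (u p) * J p s) + cnj l * (\<Sum>q\<in>S. J s q * u q) + cnj l * J s s * l"
proof -
  have inner: "(\<Sum>q\<in>S. c * J p q * (u q + (if q = s then l else 0))) =
     (\<Sum>q\<in>S. c * J p q * u q) + c * J p s * l" for p c
    using assms sum_mult_indicator_right[OF assms, of "\<lambda>q. c * J p q" l]
    by (simp add: distrib_left sum.distrib)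
  have "kernel_form S J (\<lambda>q. u q + (if q = s then l else 0)) =
     (\<Sum>p\<in>S. (\<Sum>q\<in>S. cnj (u p) * J p q * u q) + cnj (u p) * J p s * l
          + (if p = s then (\<Sum>q\<in>S. cnj l * J p q * u q) + cnj l * J p s * l else 0))"
    unfolding kernel_form_def
    by (rule sum.cong, simp, simp add: distrib_right sum.distrib inner)
  also have "\<dots> = kernel_form S J u + (\<Sum>p\<in>S. cnj (u p) * J p s * l)
     + ((\<Sum>q\<in>S. cnj l * J s q * u q) + cnj l * J s s * l)"
    using assms unfolding kernel_form_def by (simp add: sum.distrib sum.delta)
  also have "\<dots> = kernel_form S J u
     + l * (\<Sum>p\<in>S. cnj (u p) * J p s) + cnj l * (\<Sum>q\<in>S. J s q * u q) + cnj l * J s s * l"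
    by (simp add: sum_distrib_left sum_distrib_right algebra_simps)
  finally show ?thesis .
qed

lemma kernel_form_indicator:
  assumes "finite S" "p \<in> S"
  shows "kernel_form S J (\<lambda>x. if x = p then 1 else 0) = J p p"
proof -
  have "kernel_form S J (\<lambda>x. if x = p then 1 else 0) = (\<Sum>p'\<in>S. (if p' = p then 1 else 0) * J p' p)"
    unfolding kernel_form_def
    by (intro sum.cong refl) (simp add: sum_mult_indicator_right[OF assms])
  also have "\<dots> = J p p" using sum_mult_indicator_left[OF assms, of 1 "\<lambda>p'. J p' p"] by simp
  finally show ?thesis .
qed

lemma psd_kernel_diag:
  assumes "psd_kernel S J" "finite S" "p \<in> S"
  shows "Im (J p p) = 0" "0 \<le> Re (J p p)"
  using assms(1) unfolding psd_kernel_def kernel_form_indicator[OF assms(2,3), symmetric] by blast+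

lemma psd_kernel_hermitian:
  assumes "psd_kernel S J" "finite S" "p \<in> S" "q \<in> S"
  shows "J q p = cnj (J p q)"
proof -
  let ?u = "\<lambda>x. if x = p then 1 else (0::complex)"
  have R: "Im (J p p + l * J p q + cnj l * J q p + cnj l * J q q * l) = 0" for l
  proof -
    have col: "(\<Sum>p'\<in>S. cnj (?u p') * J p' q) = J p q"
      using sum_mult_indicator_left[OF assms(2,3), of 1 "\<lambda>p'. J p' q"]
      by (simp add: if_distrib[where f=cnj] cong: if_cong)
    have row: "(\<Sum>q'\<in>S. J q q' * ?u q') = J q p"
      using sum_mult_indicator_right[OF assms(2,3), of "\<lambda>q'. J q q'" 1] by simp
    have "kernel_form S J (\<lambda>x. ?u x + (if x = q then l else 0)) =
       J p p + l * J p q + cnj l * J q p + cnj l * J q q * l"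
      unfolding kernel_form_add_indicator[OF assms(2,4)] col row kernel_form_indicator[OF assms(2,3)] ..
    moreover have "Im (kernel_form S J (\<lambda>x. ?u x + (if x = q then l else 0))) = 0"
      using assms(1) unfolding psd_kernel_def by blast
    ultimately show ?thesis by (simp only:)
  qed
  have diag: "Im (J p p) = 0" "Im (J q q) = 0"
    using psd_kernel_diag(1)[OF assms(1,2,3)] psd_kernel_diag(1)[OF assms(1,2,4)] .
  have "Im (J p q) + Im (J q p) = 0" using R[of 1] diag by simp
  moreover have "Re (J p q) - Re (J q p) = 0" using R[of \<i>] diag by (simp add: algebra_simps)
  ultimately show ?thesis by (intro complex_eqI) simp_all
qed

lemma psd_kernel_remove:
  assumes "psd_kernel (insert s S) J" "finite S" "s \<notin> S"
  shows "psd_kernel S J"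
  unfolding psd_kernel_def
proof
  fix u :: "'a \<Rightarrow> complex"
  have "kernel_form (insert s S) J (u(s := 0)) = kernel_form S J (u(s := 0))"
    using assms unfolding kernel_form_def by (simp add: sum.insert)
  also have "\<dots> = kernel_form S J u"
    unfolding kernel_form_def using assms(3) by (intro sum.cong refl) auto
  moreover have "Im (kernel_form (insert s S) J (u(s := 0))) = 0 \<and>
      0 \<le> Re (kernel_form (insert s S) J (u(s := 0)))"
    using assms(1) unfolding psd_kernel_def by blast
  ultimately show "Im (kernel_form S J u) = 0 \<and> 0 \<le> Re (kernel_form S J u)" by (simp only:)
qed

lemma psd_kernel_zero_diag_col:
  assumes "psd_kernel S J" "finite S" "s \<in> S" "p \<in> S" "J s s = 0"
  shows "J p s = 0"
proof (rule ccontr)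
  assume ne: "J p s \<noteq> 0"
  let ?u = "\<lambda>x. if x = p then 1 else (0::complex)"
  define t where "t = (Re (J p p) + 1) / (2 * (cmod (J p s))^2)"
  let ?l = "- of_real t * cnj (J p s)"
  \<comment> \<open>along e_p + l e_s the form is J p p - 2 t |J p s|^2, which is negative by the choice of t\<close>
  have col: "(\<Sum>p'\<in>S. cnj (?u p') * J p' s) = J p s"
    using sum_mult_indicator_left[OF assms(2,4), of 1 "\<lambda>p'. J p' s"]
    by (simp add: if_distrib[where f=cnj] cong: if_cong)
  have row: "(\<Sum>q'\<in>S. J s q' * ?u q') = J s p"
    using sum_mult_indicator_right[OF assms(2,4), of "\<lambda>q'. J s q'" 1] by simp
  have "kernel_form S J (\<lambda>x. ?u x + (if x = s then ?l else 0)) = J p p + ?l * J p s + cnj ?l * J s p"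
    unfolding kernel_form_add_indicator[OF assms(2,3)] col row kernel_form_indicator[OF assms(2,4)] assms(5)
    by simp
  also have "\<dots> = J p p - of_real (2 * t * (cmod (J p s))^2)"
    unfolding psd_kernel_hermitian[OF assms(1,2,4,3)]
    by (simp add: complex_norm_square[symmetric] algebra_simps)
  also have "2 * t * (cmod (J p s))^2 = Re (J p p) + 1" unfolding t_def using ne by simp
  finally have "Re (kernel_form S J (\<lambda>x. ?u x + (if x = s then ?l else 0))) = -1" by simp
  moreover have "0 \<le> Re (kernel_form S J (\<lambda>x. ?u x + (if x = s then ?l else 0)))"
    using assms(1) unfolding psd_kernel_def by blast
  ultimately show False by simp
qed

lemma psd_kernel_schur_complement:
  assumes "psd_kernel S J" "finite S" "s \<in> S" "J s s = of_real a" "0 < a"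
  shows "psd_kernel S (\<lambda>p q. J p q - J p s * cnj (J q s) / of_real a)"
  unfolding psd_kernel_def
proof
  fix u :: "'a \<Rightarrow> complex"
  define b where "b = (\<Sum>p\<in>S. cnj (u p) * J p s)"
  have row: "(\<Sum>q\<in>S. J s q * u q) = cnj b"
    unfolding b_def cnj_sum using psd_kernel_hermitian[OF assms(1,2) _ assms(3)]
    by (intro sum.cong refl) simp
  let ?l = "- cnj b / of_real a"
  have "kernel_form S (\<lambda>p q. J p q - J p s * cnj (J q s) / of_real a) u
      = kernel_form S J u - b * cnj b / of_real a"
    unfolding kernel_form_def b_def
    by (simp add: algebra_simps sum_subtractf sum_distrib_left sum_distrib_right sum_divide_distrib
        flip: sum.distrib)
  also have "\<dots> = kernel_form S J (\<lambda>q. u q + (if q = s then ?l else 0))"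
    unfolding kernel_form_add_indicator[OF assms(2,3)] row b_def[symmetric] assms(4)
    using assms(5) by (simp add: field_simps)
  moreover have "Im (kernel_form S J (\<lambda>q. u q + (if q = s then ?l else 0))) = 0 \<and>
      0 \<le> Re (kernel_form S J (\<lambda>q. u q + (if q = s then ?l else 0)))"
    using assms(1) unfolding psd_kernel_def by blast
  ultimately show "Im (kernel_form S (\<lambda>p q. J p q - J p s * cnj (J q s) / of_real a) u) = 0 \<and>
      0 \<le> Re (kernel_form S (\<lambda>p q. J p q - J p s * cnj (J q s) / of_real a) u)"
    by (simp only:)
qed

lemma psd_kernel_split_rank_one:
  assumes "psd_kernel S J" "finite S" "s \<in> S"
  obtains J' g where "psd_kernel S J'" "\<And>p. p \<in> S \<Longrightarrow> J' p s = 0" "\<And>p. p \<in> S \<Longrightarrow> J' s p = 0"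
    "\<And>p q. J p q = J' p q + g p * cnj (g q)"
proof (cases "Re (J s s) = 0")
  case True
  then have "J s s = 0" using psd_kernel_diag(1)[OF assms] by (simp add: complex_eq_iff)
  then have col: "J p s = 0" if "p \<in> S" for p using psd_kernel_zero_diag_col[OF assms that] by simp
  show ?thesis
  proof (rule that[of J "\<lambda>_. 0"])
    show "J s p = 0" if "p \<in> S" for p
      using col[OF that] psd_kernel_hermitian[OF assms(1,2) that assms(3)] by simp
  qed (use assms(1) col in simp_all)
next
  case False
  define a where "a = Re (J s s)"
  have apos: "0 < a" using False psd_kernel_diag(2)[OF assms] unfolding a_def by simp
  have Jss: "J s s = of_real a" using psd_kernel_diag(1)[OF assms] unfolding a_def by (simp add: complex_eq_iff)
  define g where "g p = J p s / of_real (sqrt a)" for p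
  have gg: "g p * cnj (g q) = J p s * cnj (J q s) / of_real a" for p q
  proof -
    have "(of_real (sqrt a))^2 = (of_real a :: complex)" using apos by (simp flip: of_real_power)
    then show ?thesis unfolding g_def using apos by (simp add: field_simps power2_eq_square[symmetric])
  qed
  show ?thesis
  proof (rule that[of "\<lambda>p q. J p q - g p * cnj (g q)" g])
    show "psd_kernel S (\<lambda>p q. J p q - g p * cnj (g q))"
      unfolding gg using psd_kernel_schur_complement[OF assms Jss apos] .
    show "J p s - g p * cnj (g s) = 0" for p
      unfolding gg Jss using apos by simp
    show "J s p - g s * cnj (g p) = 0" if "p \<in> S" for p
      unfolding gg Jss using apos psd_kernel_hermitian[OF assms(1,2) that assms(3)] by simp
  qed simp
qed

lemma psd_kernel_gram:
  assumes "finite S" "psd_kernel S J"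
  shows "\<exists>(L::nat) \<psi>. \<forall>p\<in>S. \<forall>q\<in>S. J p q = (\<Sum>t<L. \<psi> t p * cnj (\<psi> t q))"
  using assms
proof (induction S arbitrary: J rule: finite_induct)
  case empty
  then show ?case by auto
next
  case (insert s S)
  obtain J' g where psd': "psd_kernel (insert s S) J'"
    and col: "\<And>p. p \<in> insert s S \<Longrightarrow> J' p s = 0" and row: "\<And>p. p \<in> insert s S \<Longrightarrow> J' s p = 0"
    and split: "\<And>p q. J p q = J' p q + g p * cnj (g q)"
    using psd_kernel_split_rank_one[OF insert(4)] insert(1) by blast
  obtain L :: nat and \<psi> where IH: "\<forall>p\<in>S. \<forall>q\<in>S. J' p q = (\<Sum>t<L. \<psi> t p * cnj (\<psi> t q))"
    using insert(3)[OF psd_kernel_remove[OF psd' insert(1,2)]] by blast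
  define \<psi>' where "\<psi>' t p = (if t < L then (if p = s then 0 else \<psi> t p) else g p)" for t p
  have "J p q = (\<Sum>t<Suc L. \<psi>' t p * cnj (\<psi>' t q))" if "p \<in> insert s S" "q \<in> insert s S" for p q
  proof -
    have "J' p q = (\<Sum>t<L. \<psi>' t p * cnj (\<psi>' t q))"
      using IH col row that by (cases "p = s \<or> q = s") (auto simp: \<psi>'_def)
    then show ?thesis by (simp add: split \<psi>'_def)
  qed
  then show ?case by (intro exI[of _ "Suc L"] exI[of _ \<psi>']) blast
qed

lemma sum_lessThan_mult_split: "(\<Sum>p<(n::nat)*m. (f::nat\<Rightarrow>'a::comm_monoid_add) p) = (\<Sum>i<n. \<Sum>a<m. f (i*m+a))"
proof -
  have "(\<Sum>p<n*m. f p) = (\<Sum>i<n. sum f {i*m..<i*m+m})" using sum.nat_group[of f m n] by simp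
  also have "\<dots> = (\<Sum>i<n. \<Sum>a<m. f (i*m+a))"
  proof (rule sum.cong[OF refl])
    fix i show "sum f {i*m..<i*m+m} = (\<Sum>a<m. f (i*m+a))"
      using sum.shift_bounds_nat_ivl[of f 0 "i*m" m] by (simp add: atLeast0LessThan add.commute)
  qed
  finally show ?thesis .
qed

lemma index_pair_less: "(i::nat) < n \<Longrightarrow> a < m \<Longrightarrow> i*m+a < n*m"
proof -
  assume "i < n" "a < m"
  then have "i*m + a < i*m + m" by simp
  also have "\<dots> = (i+1)*m" by simp
  also have "\<dots> \<le> n*m" using \<open>i<n\<close> by (intro mult_le_mono1) simp
  finally show ?thesis .
qed

lemma cscalar_mult_mat_vec:
  assumes "M \<in> carrier_mat d d" "x \<in> carrier_vec d" "y \<in> carrier_vec d"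
  shows "(M *\<^sub>v x) \<bullet>c y = (\<Sum>p<d. \<Sum>q<d. cnj (y$p) * M$$(p,q) * x$q)"
  using assms
  by (simp add: scalar_prod_def mult_mat_vec_def row_def atLeast0LessThan sum_distrib_left
      mult_ac)

lemma cscalar_self: "x \<in> carrier_vec d \<Longrightarrow> x \<bullet>c x = (\<Sum>p<d. of_real ((cmod (x$p))^2))"
proof -
  assume x: "x \<in> carrier_vec d"
  have e: "x$i * cnj (x$i) = of_real ((cmod (x$i))^2)" for i by (rule complex_norm_square[symmetric])
  show ?thesis using x unfolding scalar_prod_def by (simp add: atLeast0LessThan e del: of_real_power)
qed

lemma Re_cscalar_self: "x \<in> carrier_vec d \<Longrightarrow> Re (x \<bullet>c x) = (\<Sum>p<d. (cmod (x$p))^2)"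
  by (simp add: cscalar_self Re_sum del: of_real_power)

lemma Im_cscalar_self: "x \<in> carrier_vec d \<Longrightarrow> Im (x \<bullet>c x) = 0"
  by (simp add: cscalar_self Im_sum del: of_real_power)

lemma Re_cscalar_self_nonneg: "x \<in> carrier_vec d \<Longrightarrow> 0 \<le> Re (x \<bullet>c x)"
  by (simp add: Re_cscalar_self sum_nonneg)

lemma cscalar_mult_mat_vec_smult:
  assumes "X \<in> carrier_mat d d" "x \<in> carrier_vec d" "y \<in> carrier_vec d"
  shows "(X *\<^sub>v (a \<cdot>\<^sub>v x)) \<bullet>c (b \<cdot>\<^sub>v y) = cnj b * a * ((X *\<^sub>v x) \<bullet>c y)"
  using assms
  by (simp add: cscalar_mult_mat_vec[of X d] sum_distrib_left mult_ac)

lemma cscalar_smult_self: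
  assumes "x \<in> carrier_vec d"
  shows "(a \<cdot>\<^sub>v x) \<bullet>c (a \<cdot>\<^sub>v x) = a * cnj a * (x \<bullet>c x)"
  using assms by (simp add: scalar_prod_def sum_distrib_left mult_ac)

lemma unit_vec_of_entry_le_1:
  assumes "unit_vec_of d x" "p < d"
  shows "cmod (x$p) \<le> 1"
proof -
  have x: "x \<in> carrier_vec d" and one: "x \<bullet>c x = 1" using assms unfolding unit_vec_of_def by auto
  have "(cmod (x$p))^2 \<le> (\<Sum>q<d. (cmod (x$q))^2)"
    using assms(2) by (intro member_le_sum) auto
  also have "\<dots> = 1" using Re_cscalar_self[OF x] one by simp
  finally show ?thesis by (simp add: abs_square_le_1)
qed

lemma mtrace_mult:
  assumes "A \<in> carrier_mat m m" "B \<in> carrier_mat m m"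
  shows "mtrace (A * B) = (\<Sum>x<m. \<Sum>y<m. A$$(x,y) * B$$(y,x))"
  using assms unfolding mtrace_def
  by (simp add: scalar_prod_def row_def col_def atLeast0LessThan)

definition elem_mat :: "nat \<Rightarrow> nat \<Rightarrow> nat \<Rightarrow> complex mat" where
  "elem_mat m c d = mat m m (\<lambda>(x,y). if x = c \<and> y = d then 1 else 0)"

lemma sum_elem_mat_entry:
  assumes "a < m" "b < m"
  shows "(\<Sum>cd\<in>{..<m}\<times>{..<m}. f cd * elem_mat m (fst cd) (snd cd) $$ (a,b)) = f (a,b)"
proof -
  have "(\<Sum>cd\<in>{..<m}\<times>{..<m}. f cd * elem_mat m (fst cd) (snd cd) $$ (a,b)) =
        (\<Sum>cd\<in>{..<m}\<times>{..<m}. if cd = (a,b) then f cd else 0)"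
    using assms unfolding elem_mat_def by (intro sum.cong refl) auto
  also have "\<dots> = f (a,b)" using assms by (simp add: sum.delta')
  finally show ?thesis .
qed

lemma lin_map_on_entry_sum:
  assumes lin: "lin_map_on m \<Phi>" and fin: "finite T"
    and A: "\<And>t. t \<in> T \<Longrightarrow> A t \<in> carrier_mat m m"
  shows "M \<in> carrier_mat m m \<Longrightarrow> (\<forall>a<m. \<forall>b<m. M$$(a,b) = (\<Sum>t\<in>T. c t * A t $$ (a,b)))
    \<Longrightarrow> a < m \<Longrightarrow> b < m \<Longrightarrow> \<Phi> M $$ (a,b) = (\<Sum>t\<in>T. c t * \<Phi> (A t) $$ (a,b))"
  using fin A
proof (induction T arbitrary: M a b rule: finite_induct)
  case empty
  have "M = 0 \<cdot>\<^sub>m M" using empty by (intro eq_matI) auto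
  then have "\<Phi> M = 0 \<cdot>\<^sub>m \<Phi> M" using lin empty unfolding lin_map_on_def by metis
  moreover have "\<Phi> M \<in> carrier_mat m m" using lin empty unfolding lin_map_on_def by blast
  ultimately have "\<Phi> M $$ (a,b) = (0 \<cdot>\<^sub>m \<Phi> M) $$ (a,b)" "a < dim_row (\<Phi> M)" "b < dim_col (\<Phi> M)"
    using empty by (auto intro: arg_cong[where f="\<lambda>A. A $$ (a,b)"])
  then show ?case by simp
next
  case (insert s T)
  define M' where "M' = mat m m (\<lambda>(a,b). \<Sum>t\<in>T. c t * A t $$ (a,b))"
  have M'c: "M' \<in> carrier_mat m m" unfolding M'_def by simp
  have As: "A s \<in> carrier_mat m m" using insert by simp
  have Msplit: "M = c s \<cdot>\<^sub>m A s + M'"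
    using insert(4,5) As unfolding M'_def by (intro eq_matI) (auto simp: sum.insert[OF insert(1,2)])
  have "\<Phi> M = c s \<cdot>\<^sub>m \<Phi> (A s) + \<Phi> M'"
    using lin As M'c unfolding Msplit lin_map_on_def by (metis smult_carrier_mat)
  moreover have "\<Phi> (A s) \<in> carrier_mat m m" "\<Phi> M' \<in> carrier_mat m m"
    using lin As M'c unfolding lin_map_on_def by auto
  moreover have "\<Phi> M' $$ (a,b) = (\<Sum>t\<in>T. c t * \<Phi> (A t) $$ (a,b))"
    using insert M'c unfolding M'_def by auto
  ultimately show ?case using insert by (simp add: sum.insert)
qed

lemma (in vec_space) rank_mult_right_le:
  assumes A: "A \<in> carrier_mat n nc" and B: "B \<in> carrier_mat nc nc2"
  shows "rank (A * B) \<le> rank A"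
proof -
  define W where "W = span (set (cols A))"
  have colsA: "set (cols A) \<subseteq> carrier_vec n" using A cols_dim[of A] by (simp add: carrier_matD(1))
  have cAB: "set (cols (A * B)) \<subseteq> W"
  proof
    fix x assume "x \<in> set (cols (A * B))"
    then obtain j where j: "j < dim_col (A*B)" "x = col (A*B) j"
      by (metis cols_length cols_nth in_set_conv_nth)
    have "x = A *\<^sub>v col B j" using j A B by auto
    moreover have "col B j \<in> carrier_vec (dim_col A)" using A B j by auto
    ultimately show "x \<in> W" unfolding W_def using col_space_eq[OF A] unfolding col_space_def
      using A by auto
  qed
  have sW: "subspace class_ring W V" unfolding W_def using span_is_subspace[OF colsA] .
  have colsAB: "set (cols (A * B)) \<subseteq> carrier_vec n" using A B cols_dim
    by (metis carrier_matD(1) mult_carrier_mat)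
  have sX: "subspace class_ring (span (set (cols (A * B)))) V" using span_is_subspace[OF colsAB] .
  have sub: "span (set (cols (A * B))) \<subseteq> W"
    using cAB sW span_is_subset by (simp add: subspace_def)
  have nest: "subspace class_ring (span (set (cols (A * B)))) (vs W)"
    using nested_subspaces[OF sW sX sub] .
  have vsW: "vectorspace class_ring (vs W)" using sW subspace_is_vs by auto
  have fW: "vectorspace.fin_dim class_ring (vs W)" unfolding W_def using fin_dim_span_cols[OF A] .
  have fX: "vectorspace.fin_dim class_ring ((vs W)\<lparr>carrier := span (set (cols (A * B)))\<rparr>)"
    using fin_dim_span_cols[of "A*B" nc2] A B by auto
  show ?thesis unfolding rank_def W_def[symmetric]
    using vectorspace.subspace_dim[OF vsW nest fW fX] by simp
qed

lemma coeff_mat_smult: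
  assumes "x \<in> carrier_vec (n*m)"
  shows "coeff_mat n m (c \<cdot>\<^sub>v x) = coeff_mat n m x * (c \<cdot>\<^sub>m 1\<^sub>m m)"
proof (rule eq_matI)
  fix i a assume i: "i < dim_row (coeff_mat n m x * (c \<cdot>\<^sub>m 1\<^sub>m m))" and a: "a < dim_col (coeff_mat n m x * (c \<cdot>\<^sub>m 1\<^sub>m m))"
  then have i': "i < n" and a': "a < m" by (auto simp: coeff_mat_def)
  have "(coeff_mat n m x * (c \<cdot>\<^sub>m 1\<^sub>m m)) $$ (i,a) = (\<Sum>b<m. x$(i*m+b) * (c * (if b = a then 1 else 0)))"
    using i' a' by (simp add: coeff_mat_def scalar_prod_def row_def col_def atLeast0LessThan)
  also have "\<dots> = (\<Sum>b<m. if b = a then x$(i*m+b) * c else 0)" by (rule sum.cong) auto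
  also have "\<dots> = x$(i*m+a) * c" using a' by (simp add: sum.delta)
  finally show "coeff_mat n m (c \<cdot>\<^sub>v x) $$ (i,a) = (coeff_mat n m x * (c \<cdot>\<^sub>m 1\<^sub>m m)) $$ (i,a)"
    using i' a' assms index_pair_less[OF i' a'] by (simp add: coeff_mat_def mult.commute)
qed (auto simp: coeff_mat_def)

lemma schmidt_rank_le_of_coeff_mat_factor:
  assumes "coeff_mat n m w = coeff_mat n m v * B" "B \<in> carrier_mat m m"
  shows "schmidt_rank n m w \<le> schmidt_rank n m v"
  unfolding schmidt_rank_def assms(1)
  by (rule vec_space.rank_mult_right_le[OF _ assms(2)]) (simp add: coeff_mat_def)

lemma schmidt_rank_smult_le:
  "x \<in> carrier_vec (n*m) \<Longrightarrow> schmidt_rank n m (c \<cdot>\<^sub>v x) \<le> schmidt_rank n m x"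
  by (rule schmidt_rank_le_of_coeff_mat_factor[OF coeff_mat_smult]) auto

text \<open>The unnormalised projector onto \<Omega> = \<Sum>c<m. e_c (x) e_c; its (c,d) block is elem_mat m c d, so
  id_tensor m m \<Phi> (omega_mat m) is the Choi matrix of \<Phi>.\<close>
definition omega_mat :: "nat \<Rightarrow> complex mat" where
  "omega_mat m = mat (m*m) (m*m) (\<lambda>(p,q). if p div m = p mod m \<and> q div m = q mod m then 1 else 0)"

lemma psd_omega_mat: "psd (m*m) (omega_mat m)"
  unfolding psd_def
proof (intro conjI ballI)
  show "omega_mat m \<in> carrier_mat (m*m) (m*m)" unfolding omega_mat_def by simp
  fix u :: "complex vec" assume u: "u \<in> carrier_vec (m*m)"
  define z where "z = (\<Sum>q<m*m. if q div m = q mod m then u$q else 0)"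
  have "(omega_mat m *\<^sub>v u) \<bullet>c u = (\<Sum>p<m*m. \<Sum>q<m*m. cnj (u$p) * omega_mat m $$ (p,q) * u$q)"
    using cscalar_mult_mat_vec[of "omega_mat m" "m*m" u u] u unfolding omega_mat_def by simp
  also have "\<dots> = (\<Sum>p<m*m. \<Sum>q<m*m.
      (if p div m = p mod m then cnj (u$p) else 0) * (if q div m = q mod m then u$q else 0))"
    unfolding omega_mat_def by (intro sum.cong refl) auto
  also have "\<dots> = cnj z * z"
    unfolding z_def by (simp add: sum_product cnj_sum if_distrib[where f=cnj] cong: if_cong)
  also have "\<dots> = of_real ((cmod z)^2)" by (metis complex_norm_square mult.commute)
  finally show "Im ((omega_mat m *\<^sub>v u) \<bullet>c u) = 0" "0 \<le> Re ((omega_mat m *\<^sub>v u) \<bullet>c u)" by simp_all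
qed

lemma psd_imp_psd_kernel:
  assumes "psd d M"
  shows "psd_kernel {..<d} (\<lambda>p q. M $$ (p,q))"
  unfolding psd_kernel_def
proof
  fix u :: "nat \<Rightarrow> complex"
  have M: "M \<in> carrier_mat d d" using assms unfolding psd_def by blast
  have "kernel_form {..<d} (\<lambda>p q. M $$ (p,q)) u = (M *\<^sub>v vec d u) \<bullet>c vec d u"
    unfolding cscalar_mult_mat_vec[OF M vec_carrier vec_carrier] kernel_form_def by simp
  then show "Im (kernel_form {..<d} (\<lambda>p q. M $$ (p, q)) u) = 0 \<and> 0 \<le> Re (kernel_form {..<d} (\<lambda>p q. M $$ (p, q)) u)"
    using assms unfolding psd_def by (metis vec_carrier)
qed

lemma id_tensor_omega_mat_entry:
  assumes "c < m" "d < m" "a < m" "b < m"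
  shows "id_tensor m m \<Phi> (omega_mat m) $$ (c*m+a, d*m+b) = \<Phi> (elem_mat m c d) $$ (a,b)"
proof -
  have "block m (omega_mat m) c d = elem_mat m c d"
    unfolding block_def elem_mat_def omega_mat_def
    by (rule eq_matI) (auto simp: index_pair_less assms)
  then show ?thesis unfolding id_tensor_def using assms by (simp add: index_pair_less)
qed

text \<open>\<psi> t (c*m+a) is entry (c,a) of the t-th Kraus operator K_t, so kraus_rep says
  \<Phi>(A) = \<Sum>t<L. K_t^T * A * conj K_t on m x m matrices.\<close>
definition kraus_rep :: "nat \<Rightarrow> (complex mat \<Rightarrow> complex mat) \<Rightarrow> nat \<Rightarrow> (nat \<Rightarrow> nat \<Rightarrow> complex) \<Rightarrow> bool" where
  "kraus_rep m \<Phi> L \<psi> \<longleftrightarrow> (\<forall>c<m. \<forall>d<m. \<forall>a<m. \<forall>b<m.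
     \<Phi> (elem_mat m c d) $$ (a,b) = (\<Sum>t<L. \<psi> t (c*m+a) * cnj (\<psi> t (d*m+b))))"

lemma completely_positive_kraus_rep:
  assumes cp: "completely_positive m \<Phi>"
  shows "\<exists>(L::nat) \<psi>. kraus_rep m \<Phi> L \<psi>"
proof -
  have "psd (m*m) (id_tensor m m \<Phi> (omega_mat m))" using cp psd_omega_mat unfolding completely_positive_def by blast
  from psd_kernel_gram[OF _ psd_imp_psd_kernel[OF this]] obtain L :: nat and \<psi> where
    F: "\<forall>p\<in>{..<m*m}. \<forall>q\<in>{..<m*m}. id_tensor m m \<Phi> (omega_mat m) $$ (p,q) = (\<Sum>t<L. \<psi> t p * cnj (\<psi> t q))"
    by blast
  have "kraus_rep m \<Phi> L \<psi>"
    using F unfolding kraus_rep_def by (auto simp: id_tensor_omega_mat_entry[symmetric] index_pair_less)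
  then show ?thesis by blast
qed

text \<open>kraus_vec n m \<psi> v t is (1 (x) K_t^T) v, and kraus_coord m \<psi> v t j a its (j,a) coordinate.\<close>
definition kraus_coord :: "nat \<Rightarrow> (nat \<Rightarrow> nat \<Rightarrow> complex) \<Rightarrow> complex vec \<Rightarrow> nat \<Rightarrow> nat \<Rightarrow> nat \<Rightarrow> complex" where
  "kraus_coord m \<psi> v t j a = (\<Sum>c<m. v$(j*m+c) * \<psi> t (c*m+a))"

definition kraus_vec :: "nat \<Rightarrow> nat \<Rightarrow> (nat \<Rightarrow> nat \<Rightarrow> complex) \<Rightarrow> complex vec \<Rightarrow> nat \<Rightarrow> complex vec" where
  "kraus_vec n m \<psi> v t = vec (n*m) (\<lambda>p. kraus_coord m \<psi> v t (p div m) (p mod m))"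

lemma kraus_rep_sesquilinear:
  assumes H: "kraus_rep m \<Phi> L \<psi>"
    and a: "a < m" and b: "b < m"
  shows "(\<Sum>c<m. \<Sum>d<m. v$(j*m+c) * cnj (w$(i*m+d)) * \<Phi> (elem_mat m c d) $$ (a,b))
     = (\<Sum>t<L. kraus_coord m \<psi> v t j a * cnj (kraus_coord m \<psi> w t i b))"
proof -
  have "(\<Sum>c<m. \<Sum>d<m. v$(j*m+c) * cnj (w$(i*m+d)) * \<Phi> (elem_mat m c d) $$ (a,b))
     = (\<Sum>c<m. \<Sum>d<m. \<Sum>t<L. (v$(j*m+c) * \<psi> t (c*m+a)) * (cnj (w$(i*m+d)) * cnj (\<psi> t (d*m+b))))"
    using H a b unfolding kraus_rep_def by (intro sum.cong refl) (simp add: sum_distrib_left mult_ac)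
  also have "\<dots> = (\<Sum>t<L. \<Sum>c<m. \<Sum>d<m. (v$(j*m+c) * \<psi> t (c*m+a)) * (cnj (w$(i*m+d)) * cnj (\<psi> t (d*m+b))))"
    by (simp only: sum.swap[where B="{..<L}"])
  also have "\<dots> = (\<Sum>t<L. kraus_coord m \<psi> v t j a * cnj (kraus_coord m \<psi> w t i b))"
    unfolding kraus_coord_def by (simp add: sum_product cnj_sum)
  finally show ?thesis .
qed

lemma kraus_rep_outer_entry:
  assumes lin: "lin_map_on m \<Phi>" and H: "kraus_rep m \<Phi> L \<psi>" and a: "a < m" and b: "b < m"
  shows "\<Phi> (mat m m (\<lambda>(x,y). v$(j*m+x) * cnj (w$(i*m+y)))) $$ (a,b)
    = (\<Sum>t<L. kraus_coord m \<psi> v t j a * cnj (kraus_coord m \<psi> w t i b))"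
proof -
  let ?f = "\<lambda>cd. v$(j*m + fst cd) * cnj (w$(i*m + snd cd))"
  have "\<Phi> (mat m m (\<lambda>(x,y). v$(j*m+x) * cnj (w$(i*m+y)))) $$ (a,b)
      = (\<Sum>cd\<in>{..<m}\<times>{..<m}. ?f cd * \<Phi> (elem_mat m (fst cd) (snd cd)) $$ (a,b))"
  proof (rule lin_map_on_entry_sum[OF lin])
    show "\<forall>a<m. \<forall>b<m. mat m m (\<lambda>(x,y). v$(j*m+x) * cnj (w$(i*m+y))) $$ (a, b)
        = (\<Sum>cd\<in>{..<m}\<times>{..<m}. ?f cd * elem_mat m (fst cd) (snd cd) $$ (a, b))"
      using sum_elem_mat_entry[of _ m _ ?f] by simp
  qed (use a b in \<open>auto simp: elem_mat_def\<close>)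
  also have "\<dots> = (\<Sum>c<m. \<Sum>d<m. v$(j*m+c) * cnj (w$(i*m+d)) * \<Phi> (elem_mat m c d) $$ (a,b))"
    by (simp add: sum.cartesian_product split_beta)
  also have "\<dots> = (\<Sum>t<L. kraus_coord m \<psi> v t j a * cnj (kraus_coord m \<psi> w t i b))"
    using kraus_rep_sesquilinear[OF H] a b by simp
  finally show ?thesis .
qed

lemma dual_map_form_kraus:
  assumes lin: "lin_map_on m \<Phi>" and dual: "is_dual_map m \<Phi> \<Psi>" and H: "kraus_rep m \<Phi> L \<psi>"
    and B: "B \<in> carrier_mat m m"
  shows "(\<Sum>a<m. \<Sum>b<m. cnj (w$(i*m+a)) * \<Psi> B $$ (a,b) * v$(j*m+b))
    = (\<Sum>a<m. \<Sum>b<m. (\<Sum>t<L. kraus_coord m \<psi> v t j a * cnj (kraus_coord m \<psi> w t i b)) * B $$ (b,a))"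
proof -
  define M where "M = mat m m (\<lambda>(x,y). v$(j*m+x) * cnj (w$(i*m+y)))"
  have M: "M \<in> carrier_mat m m" unfolding M_def by simp
  have PsiB: "\<Psi> B \<in> carrier_mat m m" using dual B unfolding is_dual_map_def by blast
  have PhiM: "\<Phi> M \<in> carrier_mat m m" using lin M unfolding lin_map_on_def by blast
  have "(\<Sum>a<m. \<Sum>b<m. cnj (w$(i*m+a)) * \<Psi> B $$ (a,b) * v$(j*m+b))
      = (\<Sum>b<m. \<Sum>a<m. M $$ (b,a) * \<Psi> B $$ (a,b))"
    unfolding M_def by (subst sum.swap) (intro sum.cong refl, simp add: mult_ac)
  also have "\<dots> = mtrace (M * \<Psi> B)" using mtrace_mult[OF M PsiB] by simp
  also have "\<dots> = mtrace (\<Phi> M * B)" using dual M B unfolding is_dual_map_def by simp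
  also have "\<dots> = (\<Sum>a<m. \<Sum>b<m. \<Phi> M $$ (a,b) * B $$ (b,a))" using mtrace_mult[OF PhiM B] by simp
  also have "\<dots> = (\<Sum>a<m. \<Sum>b<m. (\<Sum>t<L. kraus_coord m \<psi> v t j a * cnj (kraus_coord m \<psi> w t i b)) * B $$ (b,a))"
    unfolding M_def by (intro sum.cong refl) (simp add: kraus_rep_outer_entry[OF lin H])
  finally show ?thesis .
qed

lemma cscalar_kraus_vec:
  assumes X: "X \<in> carrier_mat (n*m) (n*m)"
  shows "(X *\<^sub>v kraus_vec n m \<psi> v t) \<bullet>c kraus_vec n m \<psi> w t = (\<Sum>i<n. \<Sum>j<n. \<Sum>a<m. \<Sum>b<m.
    kraus_coord m \<psi> v t j a * cnj (kraus_coord m \<psi> w t i b) * X $$ (i*m+b, j*m+a))"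
proof -
  have K: "kraus_vec n m \<psi> u t \<in> carrier_vec (n*m)" for u unfolding kraus_vec_def by simp
  have "(X *\<^sub>v kraus_vec n m \<psi> v t) \<bullet>c kraus_vec n m \<psi> w t = (\<Sum>i<n. \<Sum>b<m. \<Sum>j<n. \<Sum>a<m.
      cnj (kraus_coord m \<psi> w t i b) * X $$ (i*m+b, j*m+a) * kraus_coord m \<psi> v t j a)"
    unfolding cscalar_mult_mat_vec[OF X K K] sum_lessThan_mult_split
    by (intro sum.cong refl) (simp add: kraus_vec_def index_pair_less)
  also have "\<dots> = (\<Sum>i<n. \<Sum>j<n. \<Sum>b<m. \<Sum>a<m.
      cnj (kraus_coord m \<psi> w t i b) * X $$ (i*m+b, j*m+a) * kraus_coord m \<psi> v t j a)"
    by (rule sum.cong[OF refl], rule sum.swap)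
  also have "\<dots> = (\<Sum>i<n. \<Sum>j<n. \<Sum>a<m. \<Sum>b<m.
      cnj (kraus_coord m \<psi> w t i b) * X $$ (i*m+b, j*m+a) * kraus_coord m \<psi> v t j a)"
    by (rule sum.cong[OF refl], rule sum.cong[OF refl], rule sum.swap)
  also have "\<dots> = (\<Sum>i<n. \<Sum>j<n. \<Sum>a<m. \<Sum>b<m.
      kraus_coord m \<psi> v t j a * cnj (kraus_coord m \<psi> w t i b) * X $$ (i*m+b, j*m+a))"
    by (simp add: mult_ac)
  finally show ?thesis .
qed

lemma id_tensor_dual_form_kraus:
  assumes lin: "lin_map_on m \<Phi>" and dual: "is_dual_map m \<Phi> \<Psi>" and H: "kraus_rep m \<Phi> L \<psi>"
    and X: "X \<in> carrier_mat (n*m) (n*m)" and v: "v \<in> carrier_vec (n*m)" and w: "w \<in> carrier_vec (n*m)"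
  shows "(id_tensor n m \<Psi> X *\<^sub>v v) \<bullet>c w = (\<Sum>t<L. (X *\<^sub>v kraus_vec n m \<psi> v t) \<bullet>c kraus_vec n m \<psi> w t)"
proof -
  have Y: "id_tensor n m \<Psi> X \<in> carrier_mat (n*m) (n*m)" unfolding id_tensor_def by simp
  have B: "block m X i j \<in> carrier_mat m m" for i j unfolding block_def by simp
  have "(id_tensor n m \<Psi> X *\<^sub>v v) \<bullet>c w = (\<Sum>i<n. \<Sum>a<m. \<Sum>j<n. \<Sum>b<m.
      cnj (w$(i*m+a)) * \<Psi> (block m X i j) $$ (a,b) * v$(j*m+b))"
    unfolding cscalar_mult_mat_vec[OF Y v w] sum_lessThan_mult_split
    by (intro sum.cong refl) (simp add: id_tensor_def index_pair_less)
  also have "\<dots> = (\<Sum>i<n. \<Sum>j<n. \<Sum>a<m. \<Sum>b<m.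
      cnj (w$(i*m+a)) * \<Psi> (block m X i j) $$ (a,b) * v$(j*m+b))"
    by (rule sum.cong[OF refl], rule sum.swap)
  also have "\<dots> = (\<Sum>i<n. \<Sum>j<n. \<Sum>a<m. \<Sum>b<m. \<Sum>t<L.
      kraus_coord m \<psi> v t j a * cnj (kraus_coord m \<psi> w t i b) * X $$ (i*m+b, j*m+a))"
    unfolding dual_map_form_kraus[OF lin dual H B]
    by (intro sum.cong refl) (simp add: block_def sum_distrib_right)
  also have "\<dots> = (\<Sum>t<L. (X *\<^sub>v kraus_vec n m \<psi> v t) \<bullet>c kraus_vec n m \<psi> w t)"
    unfolding cscalar_kraus_vec[OF X] by (simp only: sum.swap[where B="{..<L}"])
  finally show ?thesis .
qed

lemma trace_elem_mat_image:
  assumes lin: "lin_map_on m \<Phi>" and tp: "trace_preserving m \<Phi>" and c: "c < m" and d: "d < m"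
  shows "(\<Sum>a<m. \<Phi> (elem_mat m c d) $$ (a,a)) = (if c = d then 1 else 0)"
proof -
  have E: "elem_mat m c d \<in> carrier_mat m m" unfolding elem_mat_def by simp
  then have "\<Phi> (elem_mat m c d) \<in> carrier_mat m m" using lin unfolding lin_map_on_def by blast
  then have "(\<Sum>a<m. \<Phi> (elem_mat m c d) $$ (a,a)) = mtrace (\<Phi> (elem_mat m c d))" unfolding mtrace_def by simp
  also have "\<dots> = mtrace (elem_mat m c d)" using tp E unfolding trace_preserving_def by blast
  also have "\<dots> = (\<Sum>a<m. if a = c \<and> a = d then 1 else 0)" unfolding mtrace_def elem_mat_def by simp
  also have "\<dots> = (if c = d then 1 else 0)" using c by (cases "c = d") (simp_all add: sum.delta')
  finally show ?thesis .
qed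

lemma kraus_vec_norm_sum:
  assumes lin: "lin_map_on m \<Phi>" and tp: "trace_preserving m \<Phi>" and H: "kraus_rep m \<Phi> L \<psi>"
    and v: "v \<in> carrier_vec (n*m)"
  shows "(\<Sum>t<L. kraus_vec n m \<psi> v t \<bullet>c kraus_vec n m \<psi> v t) = v \<bullet>c v"
proof -
  have "(\<Sum>t<L. kraus_vec n m \<psi> v t \<bullet>c kraus_vec n m \<psi> v t) =
     (\<Sum>j<n. \<Sum>a<m. \<Sum>t<L. kraus_coord m \<psi> v t j a * cnj (kraus_coord m \<psi> v t j a))"
    unfolding kraus_vec_def scalar_prod_def
    by (simp add: atLeast0LessThan sum_lessThan_mult_split index_pair_less sum.swap[where A="{..<L}"])
  also have "\<dots> = (\<Sum>j<n. \<Sum>a<m. \<Sum>c<m. \<Sum>d<m. v$(j*m+c) * cnj (v$(j*m+d)) * \<Phi> (elem_mat m c d) $$ (a,a))"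
    using kraus_rep_sesquilinear[OF H] by simp
  also have "\<dots> = (\<Sum>j<n. \<Sum>c<m. \<Sum>d<m. v$(j*m+c) * cnj (v$(j*m+d)) * (\<Sum>a<m. \<Phi> (elem_mat m c d) $$ (a,a)))"
  proof (rule sum.cong[OF refl])
    fix j
    have "(\<Sum>a<m. \<Sum>c<m. \<Sum>d<m. v$(j*m+c) * cnj (v$(j*m+d)) * \<Phi> (elem_mat m c d) $$ (a,a))
       = (\<Sum>c<m. \<Sum>d<m. \<Sum>a<m. v$(j*m+c) * cnj (v$(j*m+d)) * \<Phi> (elem_mat m c d) $$ (a,a))"
      by (subst sum.swap) (rule sum.cong[OF refl], rule sum.swap)
    then show "(\<Sum>a<m. \<Sum>c<m. \<Sum>d<m. v$(j*m+c) * cnj (v$(j*m+d)) * \<Phi> (elem_mat m c d) $$ (a,a))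
       = (\<Sum>c<m. \<Sum>d<m. v$(j*m+c) * cnj (v$(j*m+d)) * (\<Sum>a<m. \<Phi> (elem_mat m c d) $$ (a,a)))"
      by (simp add: sum_distrib_left)
  qed
  also have "\<dots> = (\<Sum>j<n. \<Sum>c<m. v$(j*m+c) * cnj (v$(j*m+c)))"
    by (simp add: trace_elem_mat_image[OF lin tp] if_distrib[where f="\<lambda>x. _ * x"] sum.delta cong: if_cong)
  also have "\<dots> = v \<bullet>c v"
    using v unfolding scalar_prod_def by (simp add: atLeast0LessThan sum_lessThan_mult_split)
  finally show ?thesis .
qed

lemma coeff_mat_kraus_vec:
  "coeff_mat n m (kraus_vec n m \<psi> v t) = coeff_mat n m v * mat m m (\<lambda>(c,a). \<psi> t (c*m+a))"
  by (rule eq_matI) (auto simp: coeff_mat_def kraus_vec_def kraus_coord_def index_pair_less scalar_prod_def row_def col_def atLeast0LessThan)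

lemma schmidt_rank_kraus_vec_le: "schmidt_rank n m (kraus_vec n m \<psi> v t) \<le> schmidt_rank n m v"
  by (rule schmidt_rank_le_of_coeff_mat_factor[OF coeff_mat_kraus_vec]) simp

lemma S_norm_set_bdd_above:
  assumes X: "X \<in> carrier_mat (n*m) (n*m)"
  shows "bdd_above {cmod ((X *\<^sub>v v) \<bullet>c w) | v w.
      unit_vec_of (n*m) v \<and> unit_vec_of (n*m) w \<and>
      schmidt_rank n m v \<le> k \<and> schmidt_rank n m w \<le> k}"
proof (rule bdd_aboveI[where M="\<Sum>p<n*m. \<Sum>q<n*m. cmod (X$$(p,q))"], clarify)
  fix v w assume v: "unit_vec_of (n*m) v" and w: "unit_vec_of (n*m) w"
  have vc: "v \<in> carrier_vec (n*m)" and wc: "w \<in> carrier_vec (n*m)" using v w unfolding unit_vec_of_def by auto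
  have "cmod ((X *\<^sub>v v) \<bullet>c w) = cmod (\<Sum>p<n*m. \<Sum>q<n*m. cnj (w$p) * X$$(p,q) * v$q)"
    unfolding cscalar_mult_mat_vec[OF X vc wc] ..
  also have "\<dots> \<le> (\<Sum>p<n*m. cmod (\<Sum>q<n*m. cnj (w$p) * X$$(p,q) * v$q))" by (rule norm_sum)
  also have "\<dots> \<le> (\<Sum>p<n*m. \<Sum>q<n*m. cmod (cnj (w$p) * X$$(p,q) * v$q))"
    by (intro sum_mono norm_sum)
  also have "\<dots> \<le> (\<Sum>p<n*m. \<Sum>q<n*m. cmod (X$$(p,q)))"
  proof (intro sum_mono)
    fix p q assume p: "p \<in> {..<n*m}" and q: "q \<in> {..<n*m}"
    have "cmod (cnj (w$p) * X$$(p,q) * v$q) = cmod (w$p) * cmod (X$$(p,q)) * cmod (v$q)"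
      by (simp add: norm_mult)
    also have "\<dots> \<le> 1 * cmod (X$$(p,q)) * 1"
      using unit_vec_of_entry_le_1[OF w] unit_vec_of_entry_le_1[OF v] p q
      by (intro mult_mono) auto
    finally show "cmod (cnj (w$p) * X$$(p,q) * v$q) \<le> cmod (X$$(p,q))" by simp
  qed
  finally show "cmod ((X *\<^sub>v v) \<bullet>c w) \<le> (\<Sum>p<n*m. \<Sum>q<n*m. cmod (X$$(p,q)))" .
qed

lemma vec_eq_zero_if_Re_cscalar_self_zero:
  assumes "x \<in> carrier_vec d" "Re (x \<bullet>c x) = 0"
  shows "x = 0\<^sub>v d"
proof -
  have "\<forall>p\<in>{..<d}. (cmod (x$p))^2 = 0"
    using assms by (subst sum_nonneg_eq_0_iff[symmetric]) (auto simp: Re_cscalar_self)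
  then show ?thesis using assms(1) by (intro eq_vecI) auto
qed

lemma unit_vec_of_normalize:
  assumes x: "x \<in> carrier_vec d" and r: "0 < sqrt (Re (x \<bullet>c x))"
  shows "unit_vec_of d (complex_of_real (1 / sqrt (Re (x \<bullet>c x))) \<cdot>\<^sub>v x)"
proof -
  define r where "r = sqrt (Re (x \<bullet>c x))"
  have rp: "0 < r" using r unfolding r_def .
  have xx: "x \<bullet>c x = of_real (r^2)" using Re_cscalar_self_nonneg[OF x] Im_cscalar_self[OF x] unfolding r_def
    by (simp add: complex_eq_iff)
  have "(complex_of_real (1 / r) \<cdot>\<^sub>v x) \<bullet>c (complex_of_real (1 / r) \<cdot>\<^sub>v x) = 1"
    unfolding cscalar_smult_self[OF x] xx using rp by (simp add: field_simps power2_eq_square flip: of_real_mult of_real_power)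
  then show ?thesis unfolding unit_vec_of_def r_def[symmetric] using x by simp
qed

lemma S_norm_upper:
  assumes "X \<in> carrier_mat (n*m) (n*m)" "unit_vec_of (n*m) v" "unit_vec_of (n*m) w"
    "schmidt_rank n m v \<le> k" "schmidt_rank n m w \<le> k"
  shows "cmod ((X *\<^sub>v v) \<bullet>c w) \<le> S_norm n m k X"
  unfolding S_norm_def by (rule cSup_upper[OF _ S_norm_set_bdd_above[OF assms(1)]]) (use assms in blast)

lemma cscalar_mult_mat_vec_le_S_norm:
  assumes X: "X \<in> carrier_mat (n*m) (n*m)"
    and x: "x \<in> carrier_vec (n*m)" and y: "y \<in> carrier_vec (n*m)"
    and sx: "schmidt_rank n m x \<le> k" and sy: "schmidt_rank n m y \<le> k"
  shows "cmod ((X *\<^sub>v x) \<bullet>c y) \<le> S_norm n m k X * sqrt (Re (x \<bullet>c x)) * sqrt (Re (y \<bullet>c y))"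
proof -
  let ?rx = "sqrt (Re (x \<bullet>c x))" and ?ry = "sqrt (Re (y \<bullet>c y))"
  show ?thesis
  proof (cases "?rx = 0 \<or> ?ry = 0")
    case True
    then have "x = 0\<^sub>v (n*m) \<or> y = 0\<^sub>v (n*m)"
      using vec_eq_zero_if_Re_cscalar_self_zero[OF x] vec_eq_zero_if_Re_cscalar_self_zero[OF y] by auto
    then have "(X *\<^sub>v x) \<bullet>c y = 0" using x y unfolding cscalar_mult_mat_vec[OF X x y] by auto
    then show ?thesis using True by auto
  next
    case False
    have rx: "0 < ?rx" using False Re_cscalar_self_nonneg[OF x] by simp
    have ry: "0 < ?ry" using False Re_cscalar_self_nonneg[OF y] by simp
    let ?x = "complex_of_real (1 / ?rx) \<cdot>\<^sub>v x" and ?y = "complex_of_real (1 / ?ry) \<cdot>\<^sub>v y"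
    have "cmod ((X *\<^sub>v ?x) \<bullet>c ?y) \<le> S_norm n m k X"
      using S_norm_upper[OF X unit_vec_of_normalize[OF x rx] unit_vec_of_normalize[OF y ry]]
        order.trans[OF schmidt_rank_smult_le[OF x] sx] order.trans[OF schmidt_rank_smult_le[OF y] sy]
      by blast
    moreover have "cmod ((X *\<^sub>v ?x) \<bullet>c ?y) = cmod ((X *\<^sub>v x) \<bullet>c y) / (?rx * ?ry)"
    proof -
      have "cmod (complex_of_real ?ry * complex_of_real ?rx) = ?rx * ?ry" using rx ry by (simp add: norm_mult)
      then show ?thesis unfolding cscalar_mult_mat_vec_smult[OF X x y] using rx ry by (simp add: norm_divide)
    qed
    ultimately have "cmod ((X *\<^sub>v x) \<bullet>c y) / (?rx * ?ry) \<le> S_norm n m k X" by simp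
    then show ?thesis using rx ry by (simp add: field_simps mult.assoc)
  qed
qed

lemma id_tensor_dual_form_le_S_norm:
  assumes lin: "lin_map_on m \<Phi>" and tp: "trace_preserving m \<Phi>" and dual: "is_dual_map m \<Phi> \<Psi>"
    and H: "kraus_rep m \<Phi> L \<psi>" and X: "X \<in> carrier_mat (n*m) (n*m)"
    and v: "unit_vec_of (n*m) v" "schmidt_rank n m v \<le> k"
    and w: "unit_vec_of (n*m) w" "schmidt_rank n m w \<le> k"
  shows "cmod ((id_tensor n m \<Psi> X *\<^sub>v v) \<bullet>c w) \<le> S_norm n m k X"
proof -
  let ?S = "S_norm n m k X"
  let ?nv = "\<lambda>t. Re (kraus_vec n m \<psi> v t \<bullet>c kraus_vec n m \<psi> v t)"
  let ?nw = "\<lambda>t. Re (kraus_vec n m \<psi> w t \<bullet>c kraus_vec n m \<psi> w t)"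
  have vc: "v \<in> carrier_vec (n*m)" and wc: "w \<in> carrier_vec (n*m)"
    and vv: "v \<bullet>c v = 1" and ww: "w \<bullet>c w = 1"
    using v w unfolding unit_vec_of_def by auto
  have Kc: "kraus_vec n m \<psi> u t \<in> carrier_vec (n*m)" for u t unfolding kraus_vec_def by simp
  have S0: "0 \<le> ?S" using S_norm_upper[OF X v(1) w(1) v(2) w(2)] norm_ge_zero order.trans by blast
  have "cmod ((id_tensor n m \<Psi> X *\<^sub>v v) \<bullet>c w)
      = cmod (\<Sum>t<L. (X *\<^sub>v kraus_vec n m \<psi> v t) \<bullet>c kraus_vec n m \<psi> w t)"
    unfolding id_tensor_dual_form_kraus[OF lin dual H X vc wc] ..
  also have "\<dots> \<le> (\<Sum>t<L. cmod ((X *\<^sub>v kraus_vec n m \<psi> v t) \<bullet>c kraus_vec n m \<psi> w t))"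
    by (rule norm_sum)
  also have "\<dots> \<le> (\<Sum>t<L. ?S * sqrt (?nv t * ?nw t))"
  proof (rule sum_mono)
    fix t
    have "schmidt_rank n m (kraus_vec n m \<psi> v t) \<le> k" "schmidt_rank n m (kraus_vec n m \<psi> w t) \<le> k"
      using schmidt_rank_kraus_vec_le v(2) w(2) order.trans by blast+
    then show "cmod ((X *\<^sub>v kraus_vec n m \<psi> v t) \<bullet>c kraus_vec n m \<psi> w t) \<le> ?S * sqrt (?nv t * ?nw t)"
      using cscalar_mult_mat_vec_le_S_norm[OF X Kc Kc] by (simp add: real_sqrt_mult mult.assoc)
  qed
  also have "\<dots> \<le> (\<Sum>t<L. ?S * ((?nv t + ?nw t) / 2))"
    using S0 by (intro sum_mono mult_left_mono arith_geo_mean_sqrt Re_cscalar_self_nonneg[OF Kc])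
  also have "\<dots> = ?S * ((Re (\<Sum>t<L. kraus_vec n m \<psi> v t \<bullet>c kraus_vec n m \<psi> v t)
                      + Re (\<Sum>t<L. kraus_vec n m \<psi> w t \<bullet>c kraus_vec n m \<psi> w t)) / 2)"
    by (simp add: sum_distrib_left sum_divide_distrib sum.distrib Re_sum distrib_left add_divide_distrib)
  also have "\<dots> = ?S"
    unfolding kraus_vec_norm_sum[OF lin tp H vc] kraus_vec_norm_sum[OF lin tp H wc] vv ww by simp
  finally show ?thesis .
qed

theorem corollary4p8:
  fixes n m k :: nat and X :: "complex mat" and \<Phi> \<Psi> :: "complex mat \<Rightarrow> complex mat"
  assumes "m \<le> n" and "1 \<le> k" and "k \<le> m"
    and "psd (n*m) X"
    and "lin_map_on m \<Phi>" and "completely_positive m \<Phi>" and "trace_preserving m \<Phi>"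
    and "is_dual_map m \<Phi> \<Psi>"
  shows "S_norm n m k (id_tensor n m \<Psi> X) \<le> S_norm n m k X"
proof -
  have X: "X \<in> carrier_mat (n*m) (n*m)" using assms(4) unfolding psd_def by blast
  obtain L \<psi> where H: "kraus_rep m \<Phi> L \<psi>" using completely_positive_kraus_rep[OF assms(6)] by blast
  let ?P = "\<lambda>v w. unit_vec_of (n*m) v \<and> unit_vec_of (n*m) w \<and>
    schmidt_rank n m v \<le> k \<and> schmidt_rank n m w \<le> k"
  show ?thesis
  proof (cases "\<exists>v w. ?P v w")
    case True
    show ?thesis unfolding S_norm_def[of n m k "id_tensor n m \<Psi> X"]
      using True id_tensor_dual_form_le_S_norm[OF assms(5,7,8) H X] by (intro cSup_least) auto
  next
    case False
    then have empty: "{cmod ((id_tensor n m \<Psi> X *\<^sub>v v) \<bullet>c w) | v w. ?P v w} = {}"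
      "{cmod ((X *\<^sub>v v) \<bullet>c w) | v w. ?P v w} = {}"
      by auto
    show ?thesis unfolding S_norm_def empty by simp
  qed
qed

end
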